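(* Let $(a_\nu,b_\nu)_{\nu\ge1}$ be a sequence in $P$ converging to $(a,b)\in\mathbb{R}^2$. If the sequence $N(a_\nu,b_\nu)$ is bounded and $(a,b)\ne(0,-1)$, then $(a,b)\notin P'$. If in addition $(a,b)\in P$, then $N(a,b)\le\sup_\nu N(a_\nu,b_\nu)$.
   Context: Let $P$ be the set of $(a,b)\in\mathbb{R}^2$ such that $h(x)=x^2+ax+b$ has no multiple root and $h(x)>0$ for all real $x$ with $|x|\ge1$ (equivalently: $a^2<4b$, or $a^2>4b$ and $|a|<\min\{2,b+1\}$). Let $P'=\{(a,b)\in\mathbb{R}^2: a^2=4b\ge4\}\cup\{(a,b)\in\mathbb{R}^2:|a|=b+1\le2\}$. For $(a,b)\in P$ let $C_{a,b}$ be the affine curve $y^2+(x^2-1)(x^2+ax+b)=0$, $\mathbb{R}[C_{a,b}]=\mathbb{R}[x,y]/(y^2+(x^2-1)(x^2+ax+b))$. For $g=u(x)+v(x)y$ put $\delta(g)=\max\{\deg u,\deg v+2\}$, and for $0\ne g$ let $\theta(g)$ be the least integer $e\ge0$ with $g=\sum_i g_i^2$, $g_i\in\mathbb{R}[C_{a,b}]$, $\delta(g_i)\le e$. Define $N(a,b):=\theta(1-x^2)$ computed in $\mathbb{R}[C_{a,b}]$. Equivalently, $N(a,b)=2+\frac12\deg t$ where $s,t\in\mathbb{R}[x]$ are sums of squares with $1=t(x)(x^2+ax+b)-s(x)(x^2-1)$ and $\deg s=\deg t$ as small as possible. *)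

theory Defs
  imports "HOL-Analysis.Analysis" "HOL-Computational_Algebra.Polynomial"
begin

text \<open>The set P: h(x) = x^2 + a x + b has no multiple root and h(x) > 0 for |x| >= 1.
  For the monic quadratic h, having a multiple root means a^2 = 4 b.\<close>
definition P_set :: "(real \<times> real) set" where
  "P_set = {(a, b). a\<^sup>2 \<noteq> 4 * b \<and> (\<forall>x::real. \<bar>x\<bar> \<ge> 1 \<longrightarrow> x\<^sup>2 + a * x + b > 0)}"

definition P'_set :: "(real \<times> real) set" where
  "P'_set = {(a, b). a\<^sup>2 = 4 * b \<and> 4 * b \<ge> 4} \<union> {(a, b). \<bar>a\<bar> = b + 1 \<and> b + 1 \<le> 2}"

text \<open>Elements of R[C_{a,b}] = R[x,y]/(y^2 + (x^2-1)(x^2+ax+b)) are written uniquely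
  as u(x) + v(x) y, represented by the pair (u, v).  In R[C], y^2 = -(x^2-1) h(x).\<close>
definition hpoly :: "real \<Rightarrow> real \<Rightarrow> real poly" where
  "hpoly a b = [:b, a, 1:]"

definition ysq :: "real \<Rightarrow> real \<Rightarrow> real poly" where
  "ysq a b = - ([:-1, 0, 1:] * hpoly a b)"

definition sq_C :: "real \<Rightarrow> real \<Rightarrow> real poly \<times> real poly \<Rightarrow> real poly \<times> real poly" where
  "sq_C a b g = (fst g * fst g + snd g * snd g * ysq a b, 2 * fst g * snd g)"

text \<open>delta(u + v y) = max(deg u, deg v + 2), with the zero polynomial contributing
  nothing (its degree is -infinity); values are compared against e >= 0.\<close>
definition delta_C :: "real poly \<times> real poly \<Rightarrow> nat" where
  "delta_C g = max (degree (fst g)) (if snd g = 0 then 0 else degree (snd g) + 2)"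

definition sos_deg_C :: "real \<Rightarrow> real \<Rightarrow> nat \<Rightarrow> real poly \<times> real poly \<Rightarrow> bool" where
  "sos_deg_C a b e f \<longleftrightarrow> (\<exists>gs :: (real poly \<times> real poly) list.
      (\<forall>g\<in>set gs. delta_C g \<le> e) \<and>
      sum_list (map (\<lambda>g. fst (sq_C a b g)) gs) = fst f \<and>
      sum_list (map (\<lambda>g. snd (sq_C a b g)) gs) = snd f)"

definition theta_C :: "real \<Rightarrow> real \<Rightarrow> real poly \<times> real poly \<Rightarrow> nat" where
  "theta_C a b f = (LEAST e. sos_deg_C a b e f)"

definition N_ab :: "real \<Rightarrow> real \<Rightarrow> nat" where
  "N_ab a b = theta_C a b ([:1, 0, -1:], 0)"

end

theory Submission
  imports Defs "HOL-Computational_Algebra.Fundamental_Theorem_Algebra"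
begin

(* Writing 1 - x^2 = sum (u_i + v_i y)^2 in R[C_{a,b}] and separating the y-free part, a
   representation of level e amounts to a "certificate": nonnegative polynomials S, T with
   deg S <= 2e and S + (1 - x^2) h T = 1 - x^2, where h = x^2 + a x + b.  The converse
   direction rests on the classical fact that nonnegative real polynomials are sums of squares
   of half degree.  Hence N(a, b) is the least level of a certificate.

   Certificates exist at every point of P (an explicit multiplier T interpolating 1/h at +-1),
   so N(a_nu, b_nu) <= M for M the supremum gives certificates of level M along the sequence.
   Where h is positive inside (-1, 1), the values of T_nu at 2M + 1 such nodes are bounded
   (h_nu T_nu <= 1 there); by Lagrange interpolation a subsequence of certificates converges
   to a certificate of level M at the limit (a, b).  For (a, b) in P this gives N(a, b) <= M.
   For (a, b) in P' \ {(0, -1)}, h has a root x0 with |x0| >= 1, which is impossible since a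
   certificate forces h T >= 1 for |x| > 1. *)

definition sos_repr :: "real poly list \<Rightarrow> real poly \<Rightarrow> bool" where
  "sos_repr qs p \<longleftrightarrow> p = sum_list (map (\<lambda>q. q * q) qs) \<and> (\<forall>q\<in>set qs. 2 * degree q \<le> degree p)"

lemma sum_list_squares_scale:
  "sum_list (map (\<lambda>q. q * q) (map ((*) c) qs)) = c * c * sum_list (map (\<lambda>q. q * q) qs)"
  for c :: "'a::comm_ring"
  by (induction qs) (auto simp: algebra_simps)

lemma poly_sum_list_squares_nonneg: "poly (sum_list (map (\<lambda>q. q * q) qs)) x \<ge> (0::real)"
  by (induction qs) (auto simp: poly_sum_list)

lemma poly_pos_nbhd:
  fixes q :: "real poly"
  assumes "poly q r > 0"
  obtains d where "d > 0" "\<And>y. \<bar>y - r\<bar> < d \<Longrightarrow> poly q y > 0"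
proof -
  have "((\<lambda>x. poly q x) \<longlongrightarrow> poly q r) (at r)"
    using poly_isCont isCont_def by blast
  hence "eventually (\<lambda>x. 0 < poly q x) (at r)" using assms order_tendstoD(1) by blast
  then obtain d where "d > 0" "\<forall>x. x \<noteq> r \<and> dist x r < d \<longrightarrow> 0 < poly q x"
    unfolding eventually_at by blast
  with assms show ?thesis
    by (intro that[of d]) (auto simp: dist_real_def)
qed

text \<open>If \<open>(x - r) p\<^sub>1\<close> is nonnegative then \<open>p\<^sub>1(r) = 0\<close>; otherwise the product would change
  sign at \<open>r\<close>.\<close>
lemma nonneg_root_cofactor:
  fixes p1 :: "real poly"
  assumes nonneg: "\<forall>x. poly ([:-r, 1:] * p1) x \<ge> 0"
  shows "poly p1 r = 0"
proof (rule ccontr)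
  assume ne: "poly p1 r \<noteq> 0"
  define e where "e = (if poly p1 r > 0 then -1 else 1 :: real)"
  have "poly (smult (- e) p1) r > 0" using ne by (auto simp: e_def)
  then obtain d where d: "d > 0" "\<And>y. \<bar>y - r\<bar> < d \<Longrightarrow> poly (smult (- e) p1) y > 0"
    using poly_pos_nbhd by blast
  define y where "y = r + e * d / 2"
  have "\<bar>y - r\<bar> < d" using d(1) by (simp add: y_def e_def)
  hence "- e * poly p1 y > 0" using d(2) by simp
  moreover have "poly ([:-r, 1:] * p1) y = (y - r) * poly p1 y" by (simp add: algebra_simps)
  moreover have "y - r = e * d / 2" by (simp add: y_def)
  ultimately have "poly ([:-r, 1:] * p1) y < 0"
    using d(1) by (auto simp: e_def mult_less_0_iff split: if_splits)
  thus False using nonneg by (meson not_le)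
qed

lemma nonneg_poly_double_root:
  fixes p :: "real poly"
  assumes nonneg: "\<forall>x. poly p x \<ge> 0" and r: "poly p r = 0"
  obtains p2 where "p = [:-r, 1:] * [:-r, 1:] * p2" "\<forall>x. poly p2 x \<ge> 0"
proof -
  obtain p1 where p1: "p = [:-r, 1:] * p1" using r poly_eq_0_iff_dvd by (metis dvdE)
  have "poly p1 r = 0" using nonneg by (intro nonneg_root_cofactor) (simp add: p1)
  then obtain p2 where p2: "p1 = [:-r, 1:] * p2" using poly_eq_0_iff_dvd by (metis dvdE)
  have pp: "p = [:-r, 1:] * ([:-r, 1:] * p2)" by (simp add: p1 p2)
  have "poly p2 x \<ge> 0" if "x \<noteq> r" for x
  proof -
    have "0 \<le> poly p x" using nonneg by blast
    also have "\<dots> = (x - r)\<^sup>2 * poly p2 x" by (simp add: pp power2_eq_square algebra_simps)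
    finally show ?thesis using that by (simp add: zero_le_mult_iff)
  qed
  moreover have "poly p2 r \<ge> 0"
  proof (rule ccontr)
    assume "\<not> poly p2 r \<ge> 0"
    hence "poly (-p2) r > 0" by simp
    then obtain d where "d > 0" "\<And>y. \<bar>y - r\<bar> < d \<Longrightarrow> poly (-p2) y > 0"
      using poly_pos_nbhd by blast
    hence "poly p2 (r + d / 2) < 0" "r + d / 2 \<noteq> r" by auto
    with calculation show False by (meson not_le)
  qed
  ultimately show ?thesis using that pp by (metis mult.assoc)
qed

lemma poly_map_of_real:
  "poly (map_poly (of_real :: real \<Rightarrow> complex) p) (of_real x) = of_real (poly p x)"
  by (induction p) (auto simp: map_poly_pCons)

lemma map_poly_of_real_add_mult:
  "map_poly (of_real :: real \<Rightarrow> complex) (p * q + r) =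
     map_poly of_real p * map_poly of_real q + map_poly of_real r"
  by (rule poly_eqI) (simp add: coeff_map_poly coeff_mult)

text \<open>A real polynomial of positive degree without real roots has a monic quadratic factor
  \<open>(x - \<alpha>)\<^sup>2 + \<beta>\<^sup>2\<close> with \<open>\<beta> \<noteq> 0\<close>: divide by the real quadratic whose roots are a
  non-real complex root \<open>z\<close> and its conjugate; the linear remainder vanishes at \<open>z\<close>.\<close>
lemma rootfree_poly_quadratic_factor:
  fixes p :: "real poly"
  assumes no_root: "\<forall>x. poly p x \<noteq> 0" and deg: "degree p > 0"
  obtains \<alpha> \<beta> D where "\<beta> \<noteq> 0" "p = [:\<alpha>\<^sup>2 + \<beta>\<^sup>2, -2 * \<alpha>, 1:] * D"
proof -
  let ?C = "map_poly (of_real :: real \<Rightarrow> complex)"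
  have "degree (?C p) = degree p" by (rule degree_map_poly) simp
  then obtain z where z: "poly (?C p) z = 0" using deg alg_closed_imp_poly_has_root by metis
  have imz: "Im z \<noteq> 0"
  proof
    assume "Im z = 0"
    hence "z = of_real (Re z)" by (simp add: complex_eq_iff)
    thus False using z no_root poly_map_of_real by (metis of_real_eq_0_iff)
  qed
  define Q where "Q = [:(Re z)\<^sup>2 + (Im z)\<^sup>2, -2 * Re z, 1:]"
  define R where "R = p mod Q"
  have "degree R < 2" using degree_mod_less[of Q p] unfolding R_def Q_def
    by (cases "R = 0") auto
  hence R_lin: "R = [:coeff R 0, coeff R 1:]"
    by (intro poly_eqI) (auto simp: coeff_pCons coeff_eq_0 split: nat.split)
  have "poly (?C Q) z = 0"
    unfolding Q_def by (simp add: map_poly_pCons complex_eq_iff power2_eq_square algebra_simps)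
  moreover have "p = Q * (p div Q) + R" unfolding R_def by (simp add: mult.commute)
  ultimately have "poly (?C R) z = 0"
    using z by (metis map_poly_of_real_add_mult poly_add poly_mult mult_zero_left add_0)
  hence "of_real (coeff R 0) + of_real (coeff R 1) * z = (0::complex)"
    by (subst (asm) R_lin) (simp add: map_poly_pCons mult.commute)
  hence "coeff R 1 = 0" "coeff R 0 = 0" using imz by (auto simp: complex_eq_iff)
  hence "p = Q * (p div Q)" using R_lin \<open>p = Q * (p div Q) + R\<close> by simp
  thus ?thesis using that imz unfolding Q_def by blast
qed

lemma nonneg_poly_quadratic_factor:
  fixes p :: "real poly"
  assumes nonneg: "\<forall>x. poly p x \<ge> 0" and deg: "degree p > 0"
  obtains c d D where "p = (c * c + d * d) * D" "\<forall>x. poly D x \<ge> 0"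
    "degree p = degree D + 2" "degree c \<le> 1" "degree d \<le> 1"
proof (cases "\<exists>r. poly p r = 0")
  case True
  then obtain r D where D: "p = [:-r, 1:] * [:-r, 1:] * D" "\<forall>x. poly D x \<ge> 0"
    using nonneg_poly_double_root nonneg by metis
  have "D \<noteq> 0" using deg D(1) by auto
  hence "degree p = degree D + 2" unfolding D(1) by (subst degree_mult_eq; simp)+
  thus ?thesis using that[of "[:-r, 1:]" 0 D] D by simp
next
  case False
  then obtain \<alpha> \<beta> D where D: "\<beta> \<noteq> 0" "p = [:\<alpha>\<^sup>2 + \<beta>\<^sup>2, -2 * \<alpha>, 1:] * D"
    using rootfree_poly_quadratic_factor deg by metis
  have sq: "[:\<alpha>\<^sup>2 + \<beta>\<^sup>2, -2 * \<alpha>, 1:] = [:-\<alpha>, 1:] * [:-\<alpha>, 1:] + [:\<beta>:] * [:\<beta>:]"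
    by (simp add: power2_eq_square)
  have "poly D x \<ge> 0" for x
  proof -
    have "poly [:\<alpha>\<^sup>2 + \<beta>\<^sup>2, -2 * \<alpha>, 1:] x = (x - \<alpha>)\<^sup>2 + \<beta>\<^sup>2"
      by (simp add: power2_eq_square algebra_simps)
    also have "\<dots> > 0" using D(1) by (simp add: add_nonneg_pos)
    finally show ?thesis using nonneg D(2) by (metis poly_mult zero_le_mult_iff not_less)
  qed
  moreover have "D \<noteq> 0" using deg D(2) by auto
  hence "degree p = degree D + 2" unfolding D(2) by (subst degree_mult_eq) auto
  ultimately show ?thesis using that[of "[:-\<alpha>, 1:]" "[:\<beta>:]" D] D(2) sq by simp
qed

lemma sos_repr_mult_sum_squares:
  assumes D: "sos_repr ds D"
    and deg: "2 * max (degree c) (degree d) + degree D \<le> degree ((c * c + d * d) * D)"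
  shows "sos_repr (map ((*) c) ds @ map ((*) d) ds) ((c * c + d * d) * D)"
  unfolding sos_repr_def
proof
  show "(c * c + d * d) * D = sum_list (map (\<lambda>q. q * q) (map ((*) c) ds @ map ((*) d) ds))"
    using D by (simp only: map_append sum_list_append sum_list_squares_scale sos_repr_def)
      (simp add: algebra_simps)
  have "2 * degree (e * q) \<le> degree ((c * c + d * d) * D)"
    if "e = c \<or> e = d" "q \<in> set ds" for e q
  proof -
    have "degree (e * q) \<le> degree e + degree q" by (rule degree_mult_le)
    thus ?thesis using D deg that unfolding sos_repr_def by fastforce
  qed
  thus "\<forall>q\<in>set (map ((*) c) ds @ map ((*) d) ds). 2 * degree q \<le> degree ((c * c + d * d) * D)"
    by auto
qed

text \<open>Every nonnegative real polynomial is a sum of squares of polynomials of at most half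
  its degree (induction on the degree, peeling off quadratic factors).\<close>
theorem nonneg_poly_sos:
  fixes p :: "real poly"
  assumes "\<forall>x. poly p x \<ge> 0"
  shows "\<exists>qs. sos_repr qs p"
  using assms
proof (induction "degree p" arbitrary: p rule: less_induct)
  case less
  show ?case
  proof (cases "degree p = 0")
    case True
    then obtain c where c: "p = [:c:]" by (metis degree_eq_zeroE)
    have "c \<ge> 0" using less.prems c by (metis poly_const_conv)
    hence "sos_repr [[:sqrt c:]] p" by (simp add: sos_repr_def c)
    thus ?thesis by blast
  next
    case False
    then obtain c d D where cdD: "p = (c * c + d * d) * D" "\<forall>x. poly D x \<ge> 0"
      "degree p = degree D + 2" "degree c \<le> 1" "degree d \<le> 1"
      using nonneg_poly_quadratic_factor less.prems by blast
    then obtain ds where "sos_repr ds D" using less.hyps[of D] by auto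
    hence "sos_repr (map ((*) c) ds @ map ((*) d) ds) p"
      unfolding cdD(1) by (rule sos_repr_mult_sum_squares) (use cdD in \<open>simp add: cdD(1)[symmetric]\<close>)
    thus ?thesis by blast
  qed
qed

lemma poly_hpoly: "poly (hpoly a b) x = x\<^sup>2 + a * x + b"
  unfolding hpoly_def by (simp add: power2_eq_square algebra_simps)

text \<open>Such certificates are exactly the sums-of-squares representations of \<open>1 - x\<^sup>2\<close>
  in \<open>\<real>[C\<^sub>a\<^sub>,\<^sub>b]\<close> of level \<open>e\<close>, with \<open>S\<close> collecting the \<open>u\<^sub>i\<^sup>2\<close> and \<open>T\<close> the \<open>v\<^sub>i\<^sup>2\<close>.\<close>
definition certificate :: "real \<Rightarrow> real \<Rightarrow> nat \<Rightarrow> real poly \<Rightarrow> real poly \<Rightarrow> bool" where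
  "certificate a b e S T \<longleftrightarrow> (\<forall>x. poly S x \<ge> 0) \<and> (\<forall>x. poly T x \<ge> 0) \<and> degree S \<le> 2 * e \<and>
     S + [:1, 0, -1:] * hpoly a b * T = [:1, 0, -1:]"

lemma certificate_mono: "certificate a b e S T \<Longrightarrow> e \<le> e' \<Longrightarrow> certificate a b e' S T"
  unfolding certificate_def by auto

lemma certificate_poly:
  assumes "certificate a b e S T"
  shows "poly S x = (1 - x\<^sup>2) * (1 - (x\<^sup>2 + a * x + b) * poly T x)"
proof -
  have "poly (S + [:1, 0, -1:] * hpoly a b * T) x = poly [:1, 0, -1:] x"
    using assms unfolding certificate_def by simp
  thus ?thesis by (simp add: poly_hpoly algebra_simps power2_eq_square)
qed

lemma certificate_inside:
  assumes "certificate a b e S T" "\<bar>x\<bar> < 1"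
  shows "(x\<^sup>2 + a * x + b) * poly T x \<le> 1"
proof -
  have "0 \<le> poly S x" using assms(1) unfolding certificate_def by blast
  moreover have "x\<^sup>2 < 1" using assms(2) by (simp add: abs_square_less_1)
  ultimately show ?thesis by (simp add: certificate_poly[OF assms(1)] zero_le_mult_iff)
qed

lemma certificate_outside:
  assumes "certificate a b e S T" "\<bar>x\<bar> > 1"
  shows "(x\<^sup>2 + a * x + b) * poly T x \<ge> 1"
proof -
  have "0 \<le> poly S x" using assms(1) unfolding certificate_def by blast
  moreover have "x\<^sup>2 > 1" using assms(2) by (metis abs_square_le_1 not_le)
  ultimately show ?thesis by (simp add: certificate_poly[OF assms(1)] zero_le_mult_iff)
qed

text \<open>The degree of \<open>T\<close> is controlled by that of \<open>S\<close>: \<open>(1 - x\<^sup>2) h T = 1 - x\<^sup>2 - S\<close>.\<close>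
lemma certificate_degree_T:
  assumes "certificate a b e S T" "T \<noteq> 0"
  shows "degree T + 4 \<le> 2 * e"
proof -
  have eq: "[:1, 0, -1:] * hpoly a b * T = [:1, 0, -1:] - S" using assms(1)
    unfolding certificate_def by (metis add_diff_cancel_left')
  have "degree ([:1, 0, -1:] * hpoly a b * T) = 4 + degree T"
    using assms(2) by (subst degree_mult_eq, simp_all add: hpoly_def)+
  moreover have "degree ([:1, 0, -1::real:] - S) \<le> max 2 (degree S)"
    using degree_diff_le_max[of "[:1, 0, -1::real:]" S] by simp
  ultimately show ?thesis using eq assms(1) unfolding certificate_def by auto
qed

lemma certificate_degree_le:
  assumes "certificate a b e S T"
  shows "degree S \<le> 2 * e" "degree T \<le> 2 * e"
  using assms certificate_degree_T[OF assms] unfolding certificate_def by (cases "T = 0"; auto)+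

lemma ysq_eq: "ysq a b = [:1, 0, -1:] * hpoly a b"
proof -
  have "[:1, 0, -1:] = - [:-1, 0, 1::real:]" by simp
  thus ?thesis unfolding ysq_def by simp
qed

lemma sum_list_fst_sq_C:
  "sum_list (map (\<lambda>g. fst (sq_C a b g)) gs) =
   sum_list (map (\<lambda>g. fst g * fst g) gs) + [:1, 0, -1:] * hpoly a b * sum_list (map (\<lambda>g. snd g * snd g) gs)"
  by (induction gs) (auto simp: sq_C_def ysq_eq algebra_simps)

lemma sum_list_snd_sq_C_pure:
  "sum_list (map (\<lambda>g. snd (sq_C a b g)) (map (\<lambda>u. (u, 0)) us @ map (\<lambda>v. (0, v)) vs)) = 0"
  by (induction us) (auto simp: sq_C_def, induction vs, auto)

lemma degree_sum_list_squares_le: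
  assumes "\<forall>g\<in>set gs. degree (f g) \<le> e"
  shows "degree (sum_list (map (\<lambda>g. f g * f g) gs)) \<le> 2 * e"
  using assms
proof (induction gs)
  case (Cons g gs)
  have "degree (f g * f g) \<le> 2 * e"
    using degree_mult_le[of "f g" "f g"] Cons.prems by auto
  thus ?case using Cons degree_add_le by auto
qed simp

lemma sos_deg_C_certificate:
  assumes "sos_deg_C a b e ([:1, 0, -1:], 0)"
  shows "\<exists>S T. certificate a b e S T"
proof -
  obtain gs where gs: "\<forall>g\<in>set gs. delta_C g \<le> e"
    "sum_list (map (\<lambda>g. fst (sq_C a b g)) gs) = [:1, 0, -1:]"
    using assms unfolding sos_deg_C_def by auto
  define S where "S = sum_list (map (\<lambda>g. fst g * fst g) gs)"
  define T where "T = sum_list (map (\<lambda>g. snd g * snd g) gs)"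
  have "\<forall>g\<in>set gs. degree (fst g) \<le> e" using gs(1) unfolding delta_C_def by auto
  hence "degree S \<le> 2 * e" unfolding S_def by (rule degree_sum_list_squares_le)
  moreover have "\<forall>x. poly S x \<ge> 0" "\<forall>x. poly T x \<ge> 0" unfolding S_def T_def
    using poly_sum_list_squares_nonneg[of "map fst gs"] poly_sum_list_squares_nonneg[of "map snd gs"]
    by (simp_all add: o_def)
  moreover have "S + [:1, 0, -1:] * hpoly a b * T = [:1, 0, -1:]"
    using gs(2) sum_list_fst_sq_C[of a b gs] unfolding S_def T_def by simp
  ultimately show ?thesis unfolding certificate_def by blast
qed

text \<open>Conversely, writing \<open>S = \<Sum> u\<^sub>i\<^sup>2\<close> and \<open>T = \<Sum> v\<^sub>j\<^sup>2\<close> (possible since both are nonnegative)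
  gives the representation \<open>1 - x\<^sup>2 = \<Sum> u\<^sub>i\<^sup>2 + \<Sum> (v\<^sub>j y)\<^sup>2\<close>; the degree bound on \<open>T\<close> is what
  makes \<open>\<delta>(v\<^sub>j y) = deg v\<^sub>j + 2 \<le> e\<close>.\<close>
lemma certificate_sos_deg_C:
  assumes cert: "certificate a b e S T"
  shows "sos_deg_C a b e ([:1, 0, -1:], 0)"
proof -
  obtain us where us: "sos_repr us S" using nonneg_poly_sos cert unfolding certificate_def by blast
  obtain vs where vs: "sos_repr vs T" "T = 0 \<Longrightarrow> vs = []"
  proof (cases "T = 0")
    case True thus ?thesis using that[of "[]"] by (simp add: sos_repr_def)
  next
    case False thus ?thesis using that nonneg_poly_sos cert unfolding certificate_def by blast
  qed
  define gs where "gs = map (\<lambda>u. (u, 0::real poly)) us @ map (\<lambda>v. (0, v)) vs"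
  have "delta_C (u, 0) \<le> e" if "u \<in> set us" for u
    using us that cert unfolding sos_repr_def certificate_def delta_C_def by auto
  moreover have "delta_C (0, v) \<le> e" if v: "v \<in> set vs" for v
  proof (cases "v = 0")
    case False
    have "T \<noteq> 0" using vs v by auto
    moreover have "2 * degree v \<le> degree T" using vs v unfolding sos_repr_def by auto
    ultimately show ?thesis using certificate_degree_T[OF cert] False by (simp add: delta_C_def)
  qed (simp add: delta_C_def)
  ultimately have "\<forall>g\<in>set gs. delta_C g \<le> e" unfolding gs_def by auto
  moreover have "sum_list (map (\<lambda>g. fst (sq_C a b g)) gs) = [:1, 0, -1:]"
    using sum_list_fst_sq_C[of a b gs] us vs cert
    unfolding gs_def sos_repr_def certificate_def by (simp add: o_def)
  moreover have "sum_list (map (\<lambda>g. snd (sq_C a b g)) gs) = 0"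
    unfolding gs_def by (rule sum_list_snd_sq_C_pure)
  ultimately show ?thesis unfolding sos_deg_C_def by auto
qed

lemma N_ab_certificate:
  assumes "certificate a b e S T"
  shows "N_ab a b \<le> e" "\<exists>S' T'. certificate a b (N_ab a b) S' T'"
proof -
  have "sos_deg_C a b e ([:1, 0, -1:], 0)" using assms by (rule certificate_sos_deg_C)
  hence "N_ab a b \<le> e" "sos_deg_C a b (N_ab a b) ([:1, 0, -1:], 0)"
    unfolding N_ab_def theta_C_def by (auto intro: Least_le LeastI)
  thus "N_ab a b \<le> e" "\<exists>S' T'. certificate a b (N_ab a b) S' T'"
    using sos_deg_C_certificate by auto
qed

text \<open>The explicit multiplier used to show that certificates exist on \<open>P\<close>:
  \<open>w\<^sub>k(x) = ((1+x)/2)\<^bsup>2k\<^esup>/h(1) + ((1-x)/2)\<^bsup>2k\<^esup>/h(-1)\<close> interpolates \<open>1/h\<close> at \<open>\<plusminus>1\<close>, and for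
  large \<open>k\<close> it satisfies \<open>h w\<^sub>k \<le> 1\<close> on \<open>[-1, 1]\<close> and \<open>h w\<^sub>k \<ge> 1\<close> outside.\<close>
definition weight :: "real \<Rightarrow> real \<Rightarrow> nat \<Rightarrow> real poly" where
  "weight a b k = smult (1 / (1 + a + b)) ([:1/2, 1/2:] ^ (2 * k)) +
                  smult (1 / (1 - a + b)) ([:1/2, -1/2:] ^ (2 * k))"

lemma poly_weight:
  "poly (weight a b k) x = ((1 + x) / 2) ^ (2 * k) / (1 + a + b) + ((1 - x) / 2) ^ (2 * k) / (1 - a + b)"
  unfolding weight_def by (simp add: field_simps)

lemma weight_reflect: "poly (weight (-a) b k) (-x) = poly (weight a b k) x"
  by (simp add: poly_weight add.commute)

text \<open>A crude exponential bound used to absorb polynomial factors in \<open>k\<close>.\<close>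
lemma four_pow_ge: "real k * (1 + real k) \<le> 4 ^ k"
proof -
  have "k < 2 ^ k" by (rule less_exp)
  hence "k * (k + 1) \<le> 2 ^ k * 2 ^ k" by (intro mult_mono) (auto simp: Suc_le_eq)
  hence "k * (k + 1) \<le> (4::nat) ^ k" by (simp add: power_mult_distrib[symmetric])
  thus ?thesis by (metis add.commute of_nat_1 of_nat_add of_nat_le_iff of_nat_mult of_nat_numeral of_nat_power)
qed

lemma bernoulli_half: "t \<ge> 0 \<Longrightarrow> 1 + real k * t \<le> (1 + t / 2) ^ (2 * k)"
  using Bernoulli_inequality[of "t / 2" "2 * k"] by simp

lemma weight_terms_bound:
  assumes t: "0 \<le> t" "t \<le> 1" and k: "k \<ge> 1"
  shows "(1 - t / 2) ^ (2 * k) * (1 + real k * t) \<le> 1" "(t / 2) ^ (2 * k) \<le> t / 4 ^ k"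
proof -
  have "(1 - t / 2) ^ (2 * k) * (1 + real k * t) \<le> (1 - t / 2) ^ (2 * k) * (1 + t / 2) ^ (2 * k)"
    using t bernoulli_half[of t k] by (intro mult_left_mono) auto
  also have "\<dots> = (1 - t\<^sup>2 / 4) ^ (2 * k)"
    by (simp add: power_mult_distrib[symmetric] power2_eq_square algebra_simps)
  also have "\<dots> \<le> 1" using t by (intro power_le_one) (auto simp: power2_eq_square intro: order.trans[OF mult_le_one])
  finally show "(1 - t / 2) ^ (2 * k) * (1 + real k * t) \<le> 1" .
  have "t ^ (2 * k) \<le> t" using power_decreasing[of 1 "2 * k" t] t k by simp
  thus "(t / 2) ^ (2 * k) \<le> t / 4 ^ k" by (simp add: power_divide power_mult divide_right_mono)
qed

lemma weight_interior_estimate: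
  fixes C D t u w :: real and k :: nat
  assumes t: "0 \<le> t" "t \<le> 1" and C: "C \<ge> 0" and D: "D \<ge> 0"
    and u: "u * (1 + real k * t) \<le> 1" and w: "w \<le> t / 4 ^ k"
    and k1: "real k \<ge> C + 1" and k2: "real k \<ge> D * (1 + C)"
  shows "(1 + C * t) * u + D * (1 + C * t) * w \<le> 1"
proof -
  have kt: "1 + real k * t > 0" using t by (simp add: add_pos_nonneg)
  have "(1 + C * t) * (u * (1 + real k * t)) \<le> (1 + C * t) * 1"
    using u C t by (intro mult_left_mono) auto
  hence first: "(1 + C * t) * u * (1 + real k * t) \<le> 1 + C * t" by (simp add: mult.assoc)
  define K where "K = D * (1 + C * t) * (1 + real k * t)"
  have K: "0 \<le> K" "K \<le> 4 ^ k"
  proof -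
    show "0 \<le> K" using D C t kt by (simp add: K_def)
    have "K \<le> D * (1 + C) * (1 + real k)"
      unfolding K_def using t C D by (intro mult_mono) (auto simp: mult_left_le)
    also have "\<dots> \<le> real k * (1 + real k)" using k2 by (intro mult_right_mono) auto
    also have "\<dots> \<le> 4 ^ k" by (rule four_pow_ge)
    finally show "K \<le> 4 ^ k" .
  qed
  have "D * (1 + C * t) * w * (1 + real k * t) = K * w" by (simp add: K_def ac_simps)
  also have "\<dots> \<le> K * (t / 4 ^ k)" using K w by (intro mult_left_mono) auto
  also have "\<dots> \<le> 4 ^ k * (t / 4 ^ k)" using K t by (intro mult_right_mono) auto
  also have "\<dots> = t" by simp
  finally have second: "D * (1 + C * t) * w * (1 + real k * t) \<le> t" .
  have "(C + 1) * t \<le> real k * t" using k1 t by (intro mult_right_mono) auto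
  hence "((1 + C * t) * u + D * (1 + C * t) * w) * (1 + real k * t) \<le> 1 + real k * t"
    using first second by (simp add: algebra_simps)
  thus ?thesis using kt by (simp add: mult_le_cancel_right_pos)
qed

lemma weight_interior:
  fixes a b x :: real
  defines "P \<equiv> 1 + a + b" and "Q \<equiv> 1 - a + b" and "C \<equiv> (\<bar>2 + a\<bar> + 1) / (1 + a + b)"
  assumes PQ: "P > 0" "Q > 0" and x: "0 \<le> x" "x \<le> 1"
    and k1: "real k \<ge> C + 1" and k2: "real k \<ge> P / Q * (1 + C)"
  shows "(x\<^sup>2 + a * x + b) * poly (weight a b k) x \<le> 1"
proof -
  define t where "t = 1 - x"
  define u where "u = (1 - t / 2) ^ (2 * k)"
  define w where "w = (t / 2) ^ (2 * k)"
  have t: "0 \<le> t" "t \<le> 1" using x by (auto simp: t_def)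
  have C: "C \<ge> 0" using PQ by (simp add: C_def P_def)
  hence k: "k \<ge> 1" using k1 by linarith
  have u: "u \<ge> 0" "u * (1 + real k * t) \<le> 1"
    using weight_terms_bound(1)[OF t k] t by (auto simp: u_def)
  have w: "w \<ge> 0" "w \<le> t / 4 ^ k" using weight_terms_bound(2)[OF t k] t by (auto simp: w_def)
  have weight: "poly (weight a b k) x = u / P + w / Q"
    by (simp add: poly_weight u_def w_def P_def Q_def t_def field_simps)
  have "x\<^sup>2 + a * x + b = P - (2 + a) * t + t\<^sup>2"
    by (simp add: P_def t_def power2_eq_square algebra_simps)
  also have "\<dots> \<le> P + (\<bar>2 + a\<bar> + 1) * t"
    using t abs_ge_minus_self[of "2 + a"] mult_right_mono[of "-(2 + a)" "\<bar>2 + a\<bar>" t]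
      power_decreasing[of 1 2 t] by (simp add: algebra_simps)
  also have "\<dots> = P * (1 + C * t)" using PQ by (simp add: C_def P_def field_simps)
  finally have h: "x\<^sup>2 + a * x + b \<le> P * (1 + C * t)" .
  have "(x\<^sup>2 + a * x + b) * poly (weight a b k) x \<le> P * (1 + C * t) * (u / P + w / Q)"
    unfolding weight using h u w PQ by (intro mult_right_mono) auto
  also have "\<dots> = (1 + C * t) * u + P / Q * (1 + C * t) * w" using PQ by (simp add: field_simps)
  also have "\<dots> \<le> 1"
    using t C PQ u(2) w(2) k1 k2 by (intro weight_interior_estimate) auto
  finally show ?thesis .
qed

text \<open>\<open>h w\<^sub>k \<ge> 1\<close> for \<open>x \<ge> 1\<close>: there the first term of \<open>w\<^sub>k\<close> grows at least like \<open>1 + k (x - 1)\<close>;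
  when the vertex of \<open>h\<close> lies to the right of \<open>1\<close>, \<open>k\<close> must dominate \<open>1 / min h\<close>.\<close>
lemma weight_exterior:
  fixes a b x :: real
  assumes P: "1 + a + b > 0" and Q: "1 - a + b > 0" and x: "x \<ge> 1" and hx: "x\<^sup>2 + a * x + b > 0"
    and k: "a < -2 \<Longrightarrow> real k * (b - a\<^sup>2 / 4) \<ge> -(2 + a)"
  shows "(x\<^sup>2 + a * x + b) * poly (weight a b k) x \<ge> 1"
proof -
  define t where "t = x - 1"
  define h where "h = x\<^sup>2 + a * x + b"
  have t: "t \<ge> 0" using x by (simp add: t_def)
  have growth: "1 + real k * t \<le> ((1 + x) / 2) ^ (2 * k)"
    using bernoulli_half[OF t, of k] by (simp add: t_def field_simps)
  have "(2 + a) + t + real k * h \<ge> 0"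
  proof (cases "a < -2")
    case True
    have "h = (x + a / 2)\<^sup>2 + (b - a\<^sup>2 / 4)" by (simp add: h_def power2_eq_square algebra_simps)
    hence "real k * h \<ge> real k * (b - a\<^sup>2 / 4)" by (intro mult_left_mono) auto
    thus ?thesis using k[OF True] t by linarith
  qed (use t hx h_def in auto)
  moreover have "h * (1 + real k * t) - (1 + a + b) = t * ((2 + a) + t + real k * h)"
    by (simp add: h_def t_def algebra_simps power2_eq_square)
  ultimately have "1 + a + b \<le> h * (1 + real k * t)"
    using t by (metis diff_ge_0_iff_ge mult_nonneg_nonneg)
  also have "\<dots> \<le> h * ((1 + x) / 2) ^ (2 * k)" using growth hx h_def by (intro mult_left_mono) auto
  finally have "1 \<le> h * (((1 + x) / 2) ^ (2 * k) / (1 + a + b))" using P by simp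
  also have "\<dots> \<le> h * poly (weight a b k) x"
    unfolding poly_weight using Q hx h_def by (intro mult_left_mono) (auto simp: power_mult)
  finally show ?thesis by (simp add: h_def)
qed

text \<open>On \<open>P\<close>, \<open>h(1)\<close> and \<open>h(-1)\<close> are positive, so the multiplier is well defined.\<close>
lemma P_set_endpoints: "(a, b) \<in> P_set \<Longrightarrow> 1 + a + b > 0 \<and> 1 - a + b > 0"
  unfolding P_set_def by (auto dest: spec[of _ 1] spec[of _ "-1"])

lemma P_set_reflect: "(a, b) \<in> P_set \<Longrightarrow> (-a, b) \<in> P_set"
  unfolding P_set_def by (auto dest: spec[of _ "- _"])

text \<open>A sufficient size of \<open>k\<close> for the bounds on \<open>[0, \<infinity>)\<close>, collected from the two lemmas above.\<close>
definition weight_order :: "real \<Rightarrow> real \<Rightarrow> real" where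
  "weight_order a b = (let C = (\<bar>2 + a\<bar> + 1) / (1 + a + b) in
     max (max (C + 1) ((1 + a + b) / (1 - a + b) * (1 + C)))
         (if a < -2 then -(2 + a) / (b - a\<^sup>2 / 4) else 0))"

lemma weight_bounds_nonneg:
  assumes P: "(a, b) \<in> P_set" and k: "real k \<ge> weight_order a b" and x: "x \<ge> 0"
  shows "\<bar>x\<bar> \<le> 1 \<Longrightarrow> (x\<^sup>2 + a * x + b) * poly (weight a b k) x \<le> 1"
    and "\<bar>x\<bar> \<ge> 1 \<Longrightarrow> (x\<^sup>2 + a * x + b) * poly (weight a b k) x \<ge> 1"
proof -
  have pos: "\<And>x. \<bar>x\<bar> \<ge> 1 \<Longrightarrow> x\<^sup>2 + a * x + b > 0" using P unfolding P_set_def by auto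
  have PQ: "1 + a + b > 0" "1 - a + b > 0" using P_set_endpoints[OF P] by simp_all
  show "(x\<^sup>2 + a * x + b) * poly (weight a b k) x \<le> 1" if "\<bar>x\<bar> \<le> 1"
    using k x that PQ by (intro weight_interior) (auto simp: weight_order_def Let_def)
  show "(x\<^sup>2 + a * x + b) * poly (weight a b k) x \<ge> 1" if "\<bar>x\<bar> \<ge> 1"
  proof (rule weight_exterior[OF PQ])
    assume a: "a < -2"
    have "(-a / 2)\<^sup>2 + a * (-a / 2) + b > 0" using pos[of "-a / 2"] a by simp
    hence m: "b - a\<^sup>2 / 4 > 0" by (simp add: power2_eq_square field_simps)
    have "-(2 + a) / (b - a\<^sup>2 / 4) \<le> real k" using k a by (simp add: weight_order_def Let_def)
    thus "real k * (b - a\<^sup>2 / 4) \<ge> -(2 + a)" using m by (simp add: pos_divide_le_eq)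
  qed (use x that pos in auto)
qed

text \<open>For \<open>(a, b) \<in> P\<close> the multiplier \<open>w\<^sub>k\<close> works on the whole line for \<open>k\<close> large; negative
  \<open>x\<close> are handled by the symmetry \<open>(a, x) \<mapsto> (-a, -x)\<close>.\<close>
lemma weight_bounds:
  assumes P: "(a, b) \<in> P_set"
  obtains k where "\<And>x. \<bar>x\<bar> \<le> 1 \<Longrightarrow> (x\<^sup>2 + a * x + b) * poly (weight a b k) x \<le> 1"
    "\<And>x. \<bar>x\<bar> \<ge> 1 \<Longrightarrow> (x\<^sup>2 + a * x + b) * poly (weight a b k) x \<ge> 1"
proof -
  obtain k :: nat where k: "real k \<ge> max (weight_order a b) (weight_order (-a) b)"
    by (meson real_arch_simple)
  have reflect: "(x\<^sup>2 + a * x + b) * poly (weight a b k) x =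
      ((-x)\<^sup>2 + (-a) * (-x) + b) * poly (weight (-a) b k) (-x)" for x
    by (simp add: weight_reflect)
  note nonneg = weight_bounds_nonneg[OF P] weight_bounds_nonneg[OF P_set_reflect[OF P]]
  show ?thesis
  proof (rule that)
    fix x :: real
    show "\<bar>x\<bar> \<le> 1 \<Longrightarrow> (x\<^sup>2 + a * x + b) * poly (weight a b k) x \<le> 1"
      using k nonneg(1)[of k x] nonneg(3)[of k "-x"] by (cases "x \<ge> 0") (auto simp: reflect)
    show "\<bar>x\<bar> \<ge> 1 \<Longrightarrow> (x\<^sup>2 + a * x + b) * poly (weight a b k) x \<ge> 1"
      using k nonneg(2)[of k x] nonneg(4)[of k "-x"] by (cases "x \<ge> 0") (auto simp: reflect)
  qed
qed

text \<open>Every point of \<open>P\<close> carries a certificate, namely \<open>T = w\<^sub>k\<close>, \<open>S = (1 - x\<^sup>2)(1 - h w\<^sub>k)\<close>.\<close>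
lemma certificate_exists:
  assumes "(a, b) \<in> P_set"
  shows "\<exists>e S T. certificate a b e S T"
proof -
  obtain k where k: "\<And>x. \<bar>x\<bar> \<le> 1 \<Longrightarrow> (x\<^sup>2 + a * x + b) * poly (weight a b k) x \<le> 1"
    "\<And>x. \<bar>x\<bar> \<ge> 1 \<Longrightarrow> (x\<^sup>2 + a * x + b) * poly (weight a b k) x \<ge> 1"
    using weight_bounds[OF assms] by blast
  define T where "T = weight a b k"
  define S where "S = [:1, 0, -1:] * (1 - hpoly a b * T)"
  have "poly T x \<ge> 0" for x
    using P_set_endpoints[OF assms] unfolding T_def poly_weight by (simp add: power_mult)
  moreover have "poly S x \<ge> 0" for x
  proof -
    have S: "poly S x = (1 - x\<^sup>2) * (1 - (x\<^sup>2 + a * x + b) * poly T x)"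
      by (simp add: S_def poly_hpoly power2_eq_square algebra_simps)
    show ?thesis
    proof (cases "\<bar>x\<bar> \<le> 1")
      case True
      thus ?thesis using k(1)[OF True] abs_square_le_1[of x] by (simp add: S T_def)
    next
      case False
      thus ?thesis using k(2)[of x] abs_square_le_1[of x] by (simp add: S T_def mult_nonpos_nonpos)
    qed
  qed
  moreover have "S + [:1, 0, -1:] * hpoly a b * T = [:1, 0, -1:]"
    by (simp add: S_def algebra_simps one_pCons)
  ultimately have "certificate a b (degree S) S T" unfolding certificate_def by auto
  thus ?thesis by blast
qed

text \<open>It turns convergence of polynomials of bounded degree at
  finitely many nodes into convergence everywhere.\<close>
definition lagrange :: "'a::field set \<Rightarrow> 'a \<Rightarrow> 'a poly" where
  "lagrange X j = smult (1 / (\<Prod>k\<in>X - {j}. (j - k))) (\<Prod>k\<in>X - {j}. [:-k, 1:])"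

lemma poly_lagrange_self: "finite X \<Longrightarrow> poly (lagrange X j) j = 1"
  unfolding lagrange_def by (simp add: poly_prod)

lemma poly_lagrange_other: "finite X \<Longrightarrow> i \<in> X \<Longrightarrow> i \<noteq> j \<Longrightarrow> poly (lagrange X j) i = 0"
  unfolding lagrange_def by (auto simp: poly_prod)

lemma degree_lagrange: "finite X \<Longrightarrow> j \<in> X \<Longrightarrow> degree (lagrange X j) \<le> card X - 1"
proof -
  assume X: "finite X" "j \<in> X"
  have "degree (\<Prod>k\<in>X - {j}. [:-k, 1:]) \<le> (\<Sum>k\<in>X - {j}. degree [:-k, 1:])"
    using degree_prod_sum_le[of "X - {j}" "\<lambda>k. [:-k, 1:]"] X by (simp add: o_def)
  also have "\<dots> = card X - 1" using X by simp
  finally show ?thesis unfolding lagrange_def by simp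
qed

lemma degree_lagrange_sum:
  assumes "finite X" "X \<noteq> {}"
  shows "degree (\<Sum>j\<in>X. smult (c j) (lagrange X j)) < card X"
proof -
  have "degree (\<Sum>j\<in>X. smult (c j) (lagrange X j)) \<le> card X - 1"
    by (rule degree_sum_le) (use assms degree_lagrange in \<open>auto intro: order.trans[OF degree_smult_le]\<close>)
  moreover have "card X > 0" using assms by (simp add: card_gt_0_iff)
  ultimately show ?thesis by linarith
qed

lemma lagrange_interpolation:
  fixes p :: "'a::field poly"
  assumes X: "finite X" and deg: "degree p < card X"
  shows "p = (\<Sum>j\<in>X. smult (poly p j) (lagrange X j))"
proof -
  define q where "q = p - (\<Sum>j\<in>X. smult (poly p j) (lagrange X j))"
  have roots: "poly q i = 0" if "i \<in> X" for i
  proof -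
    have "(\<Sum>j\<in>X. poly p j * poly (lagrange X j) i) = (\<Sum>j\<in>{i}. poly p j * poly (lagrange X j) i)"
      by (rule sum.mono_neutral_right) (use X that in \<open>auto simp: poly_lagrange_other\<close>)
    thus ?thesis unfolding q_def using X by (simp add: poly_sum poly_lagrange_self)
  qed
  have "X \<noteq> {}" using deg by auto
  hence "degree q < card X" unfolding q_def
    using degree_diff_le_max[of p] degree_lagrange_sum[OF X] deg by (meson le_less_trans max_less_iff_conj)
  have "q = 0"
  proof (rule ccontr)
    assume "q \<noteq> 0"
    hence "card X \<le> card {x. poly q x = 0}"
      using poly_roots_finite roots by (intro card_mono) auto
    also have "\<dots> \<le> degree q" using \<open>q \<noteq> 0\<close> by (rule card_poly_roots_bound)
    finally show False using \<open>degree q < card X\<close> by simp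
  qed
  thus ?thesis unfolding q_def by simp
qed

lemma poly_limit_from_nodes:
  fixes p :: "nat \<Rightarrow> 'a::{real_normed_field} poly"
  assumes X: "finite X" and deg: "\<And>n. degree (p n) < card X"
    and conv: "\<And>j. j \<in> X \<Longrightarrow> convergent (\<lambda>n. poly (p n) j)"
  obtains q where "degree q < card X" "\<And>x. (\<lambda>n. poly (p n) x) \<longlonglongrightarrow> poly q x"
proof
  define q where "q = (\<Sum>j\<in>X. smult (lim (\<lambda>n. poly (p n) j)) (lagrange X j))"
  have "X \<noteq> {}" using deg[of 0] by auto
  thus "degree q < card X" unfolding q_def by (rule degree_lagrange_sum[OF X])
  fix x
  have "(\<lambda>n. poly (p n) x) = (\<lambda>n. \<Sum>j\<in>X. poly (p n) j * poly (lagrange X j) x)"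
    by (subst lagrange_interpolation[OF X deg]) (simp add: poly_sum)
  also have "\<dots> \<longlonglongrightarrow> (\<Sum>j\<in>X. lim (\<lambda>n. poly (p n) j) * poly (lagrange X j) x)"
    using conv by (intro tendsto_sum tendsto_mult_right) (simp add: convergent_LIMSEQ_iff)
  finally show "(\<lambda>n. poly (p n) x) \<longlonglongrightarrow> poly q x" by (simp add: q_def poly_sum)
qed

lemma finite_convergent_subseq:
  fixes f :: "nat \<Rightarrow> 'a \<Rightarrow> 'b::{real_normed_vector, heine_borel}"
  assumes "finite X" "\<And>j. j \<in> X \<Longrightarrow> Bseq (\<lambda>n. f n j)"
  shows "\<exists>r. strict_mono r \<and> (\<forall>j\<in>X. convergent (\<lambda>n. f (r n) j))"
  using assms
proof (induction X rule: finite_induct)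
  case empty
  show ?case by (rule exI[of _ id]) (simp add: strict_mono_def)
next
  case (insert i X)
  then obtain r where r: "strict_mono r" "\<forall>j\<in>X. convergent (\<lambda>n. f (r n) j)" by auto
  have "bounded (range (\<lambda>n. f n i))" using insert.prems[of i] by (simp add: Bseq_eq_bounded)
  hence "bounded (range (\<lambda>n. f (r n) i))" by (rule bounded_subset) auto
  then obtain l r' where r': "strict_mono r'" "((\<lambda>n. f (r n) i) \<circ> r') \<longlonglongrightarrow> l"
    using bounded_imp_convergent_subsequence by blast
  have "convergent (\<lambda>n. f (r (r' n)) j)" if "j \<in> insert i X" for j
  proof (cases "j = i")
    case True thus ?thesis using r'(2) by (auto simp: o_def convergent_def)
  next
    case False
    hence "convergent (\<lambda>n. f (r n) j)" using r(2) that by auto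
    then obtain L where "(\<lambda>n. f (r n) j) \<longlonglongrightarrow> L" by (auto simp: convergent_def)
    hence "(\<lambda>n. f (r (r' n)) j) \<longlonglongrightarrow> L" using LIMSEQ_subseq_LIMSEQ[OF _ r'(1)] by (auto simp: o_def)
    thus ?thesis by (auto simp: convergent_def)
  qed
  moreover have "strict_mono (r \<circ> r')" using r(1) r'(1) by (rule strict_mono_o)
  ultimately show ?case by auto
qed

lemma open_contains_card:
  fixes U :: "real set"
  assumes "open U" "x \<in> U"
  obtains X where "finite X" "card X = n" "X \<subseteq> U"
proof -
  have "infinite U" using finite_imp_not_open[of U] assms by auto
  thus ?thesis using infinite_arbitrarily_large that by metis
qed

lemma poly_pos_inside:
  fixes p :: "real poly"
  assumes y0: "\<bar>y0\<bar> \<le> 1" and pos: "poly p y0 > 0"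
  obtains x1 where "\<bar>x1\<bar> < 1" "poly p x1 > 0"
proof -
  obtain d where d: "d > 0" "\<And>y. \<bar>y - y0\<bar> < d \<Longrightarrow> poly p y > 0"
    using poly_pos_nbhd[OF pos] by blast
  define m where "m = min d 1 / 2"
  have m: "0 < m" "m < d" "m \<le> 1 / 2" using d(1) by (auto simp: m_def)
  have "\<bar>y0 * (1 - m) - y0\<bar> = \<bar>y0\<bar> * m" using m by (simp add: algebra_simps abs_mult)
  also have "\<dots> \<le> 1 * m" using y0 m by (intro mult_right_mono) auto
  finally have "poly p (y0 * (1 - m)) > 0" using m by (intro d(2)) simp
  moreover have "\<bar>y0 * (1 - m)\<bar> < 1"
  proof -
    have "\<bar>y0\<bar> * (1 - m) \<le> 1 - m" using mult_right_mono[of "\<bar>y0\<bar>" 1 "1 - m"] y0 m by simp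
    moreover have "\<bar>y0 * (1 - m)\<bar> = \<bar>y0\<bar> * (1 - m)" using m by (simp add: abs_mult)
    ultimately show ?thesis using m by linarith
  qed
  ultimately show ?thesis using that by blast
qed

text \<open>At a point of \<open>(-1, 1)\<close> where the limiting \<open>h\<close> is positive, the values of certificates stay
  bounded, because \<open>h\<^sub>\<nu> T\<^sub>\<nu> \<le> 1\<close> there and \<open>h\<^sub>\<nu>\<close> is eventually bounded away from \<open>0\<close>.\<close>
lemma certificate_values_bounded:
  assumes cert: "\<And>\<nu>. certificate (A \<nu>) (B \<nu>) e (SS \<nu>) (TT \<nu>)"
    and A: "A \<longlonglongrightarrow> a" and B: "B \<longlonglongrightarrow> b" and j: "\<bar>j\<bar> < 1" "j\<^sup>2 + a * j + b > 0"
  shows "Bseq (\<lambda>\<nu>. poly (TT \<nu>) j)"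
proof -
  define c where "c = (j\<^sup>2 + a * j + b) / 2"
  have c: "c > 0" using j by (simp add: c_def)
  have "(\<lambda>\<nu>. j\<^sup>2 + A \<nu> * j + B \<nu>) \<longlonglongrightarrow> j\<^sup>2 + a * j + b" using A B by (intro tendsto_intros)
  hence "eventually (\<lambda>\<nu>. c < j\<^sup>2 + A \<nu> * j + B \<nu>) sequentially"
    using j by (intro order_tendstoD) (auto simp: c_def)
  hence "eventually (\<lambda>\<nu>. norm (poly (TT \<nu>) j) \<le> 1 / c) sequentially"
  proof (rule eventually_mono)
    fix \<nu> assume hc: "c < j\<^sup>2 + A \<nu> * j + B \<nu>"
    have T: "poly (TT \<nu>) j \<ge> 0" using cert unfolding certificate_def by blast
    have "c * poly (TT \<nu>) j \<le> (j\<^sup>2 + A \<nu> * j + B \<nu>) * poly (TT \<nu>) j"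
      using hc T by (intro mult_right_mono) auto
    also have "\<dots> \<le> 1" using certificate_inside[OF cert j(1)] .
    finally show "norm (poly (TT \<nu>) j) \<le> 1 / c" using T c by (simp add: field_simps)
  qed
  moreover have "1 / c > 0" using c by simp
  ultimately show ?thesis unfolding Bfun_def by blast
qed

lemma certificate_pointwise_limit:
  assumes cert: "\<And>n. certificate (A n) (B n) e (SS n) (TT n)"
    and A: "A \<longlonglongrightarrow> a" and B: "B \<longlonglongrightarrow> b"
    and S: "\<And>x. (\<lambda>n. poly (SS n) x) \<longlonglongrightarrow> poly S x"
    and T: "\<And>x. (\<lambda>n. poly (TT n) x) \<longlonglongrightarrow> poly T x" and deg: "degree S \<le> 2 * e"
  shows "certificate a b e S T"
proof -
  have "poly S x = (1 - x\<^sup>2) * (1 - (x\<^sup>2 + a * x + b) * poly T x)" for x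
  proof (rule LIMSEQ_unique[OF S])
    show "(\<lambda>n. poly (SS n) x) \<longlonglongrightarrow> (1 - x\<^sup>2) * (1 - (x\<^sup>2 + a * x + b) * poly T x)"
      unfolding certificate_poly[OF cert] using A B T by (intro tendsto_intros)
  qed
  hence "poly (S + [:1, 0, -1:] * hpoly a b * T) = poly [:1, 0, -1:]"
    by (auto simp: poly_hpoly algebra_simps power2_eq_square)
  hence "S + [:1, 0, -1:] * hpoly a b * T = [:1, 0, -1:]" by (simp add: poly_eq_poly_eq_iff)
  moreover have "poly S x \<ge> 0" "poly T x \<ge> 0" for x
    using tendsto_lowerbound[OF S] tendsto_lowerbound[OF T] cert unfolding certificate_def by auto
  ultimately show ?thesis using deg unfolding certificate_def by blast
qed

text \<open>The values of \<open>T\<^sub>\<nu>\<close> at \<open>2e + 1\<close> nodes where \<open>h > 0\<close> are bounded; a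
  subsequence converges there, hence everywhere, and so does \<open>S\<^sub>\<nu>\<close>.\<close>
lemma certificate_limit:
  assumes cert: "\<And>\<nu>. certificate (A \<nu>) (B \<nu>) e (SS \<nu>) (TT \<nu>)"
    and A: "A \<longlonglongrightarrow> a" and B: "B \<longlonglongrightarrow> b" and y0: "\<bar>y0\<bar> \<le> 1" "y0\<^sup>2 + a * y0 + b > 0"
  shows "\<exists>S T. certificate a b e S T"
proof -
  define U where "U = {x. \<bar>x\<bar> < 1 \<and> x\<^sup>2 + a * x + b > 0}"
  obtain x1 where "x1 \<in> U"
    using poly_pos_inside[of y0 "hpoly a b"] y0 by (auto simp: U_def poly_hpoly)
  moreover have "open U" unfolding U_def by (intro open_Collect_conj open_Collect_less continuous_intros)
  ultimately obtain X where X: "finite X" "card X = Suc (2 * e)" "X \<subseteq> U"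
    by (metis open_contains_card)
  have "\<And>j. j \<in> X \<Longrightarrow> Bseq (\<lambda>\<nu>. poly (TT \<nu>) j)"
    using certificate_values_bounded[OF cert A B] X(3) by (auto simp: U_def)
  then obtain r where r: "strict_mono r" "\<forall>j\<in>X. convergent (\<lambda>n. poly (TT (r n)) j)"
    using finite_convergent_subseq[OF X(1), of "\<lambda>n j. poly (TT n) j"] by blast
  have cert': "certificate (A (r n)) (B (r n)) e (SS (r n)) (TT (r n))" for n by (rule cert)
  have A': "(\<lambda>n. A (r n)) \<longlonglongrightarrow> a" and B': "(\<lambda>n. B (r n)) \<longlonglongrightarrow> b"
    using LIMSEQ_subseq_LIMSEQ[OF A r(1)] LIMSEQ_subseq_LIMSEQ[OF B r(1)] by (simp_all add: o_def)
  have deg: "\<And>n. degree (SS (r n)) < card X" "\<And>n. degree (TT (r n)) < card X"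
    using certificate_degree_le[OF cert'] X(2) by (simp_all add: le_imp_less_Suc)
  have "\<And>j. j \<in> X \<Longrightarrow> convergent (\<lambda>n. poly (TT (r n)) j)" using r(2) by blast
  then obtain T where T: "\<And>x. (\<lambda>n. poly (TT (r n)) x) \<longlonglongrightarrow> poly T x"
    using poly_limit_from_nodes[of X "\<lambda>n. TT (r n)", OF X(1) deg(2)] by metis
  have "(\<lambda>n. poly (SS (r n)) j) \<longlonglongrightarrow> (1 - j\<^sup>2) * (1 - (j\<^sup>2 + a * j + b) * poly T j)" for j
    unfolding certificate_poly[OF cert'] using A' B' T by (intro tendsto_intros)
  hence "\<And>j. j \<in> X \<Longrightarrow> convergent (\<lambda>n. poly (SS (r n)) j)" by (rule convergentI)
  then obtain S where S: "degree S < card X" "\<And>x. (\<lambda>n. poly (SS (r n)) x) \<longlonglongrightarrow> poly S x"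
    using poly_limit_from_nodes[of X "\<lambda>n. SS (r n)", OF X(1) deg(1)] by metis
  have "certificate a b e S T"
    by (rule certificate_pointwise_limit[OF cert' A' B' S(2) T]) (use S(1) X(2) in simp)
  thus ?thesis by blast
qed

text \<open>A certificate forces \<open>h\<close> to be zero-free outside \<open>(-1, 1)\<close>: \<open>h T \<ge> 1\<close> for \<open>|x| > 1\<close>
  persists in the limit \<open>x \<rightarrow> x\<^sub>0\<close>.\<close>
lemma certificate_no_outer_root:
  assumes cert: "certificate a b e S T" and x0: "\<bar>x0\<bar> \<ge> 1"
  shows "x0\<^sup>2 + a * x0 + b \<noteq> 0"
proof
  assume root: "x0\<^sup>2 + a * x0 + b = 0"
  define z where "z n = x0 * (1 + inverse (real (Suc n)))" for n
  have "z \<longlonglongrightarrow> x0 * (1 + 0)" unfolding z_def by (intro tendsto_intros LIMSEQ_inverse_real_of_nat)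
  hence "(\<lambda>n. ((z n)\<^sup>2 + a * z n + b) * poly T (z n)) \<longlonglongrightarrow> (x0\<^sup>2 + a * x0 + b) * poly T x0"
    by (intro tendsto_intros) simp_all
  moreover have "\<bar>z n\<bar> > 1" for n
  proof -
    define i where "i = inverse (real (Suc n))"
    have i: "i > 0" by (simp add: i_def)
    have "1 + i \<le> \<bar>x0\<bar> * (1 + i)" using x0 i mult_right_mono[of 1 "\<bar>x0\<bar>" "1 + i"] by simp
    moreover have "\<bar>z n\<bar> = \<bar>x0\<bar> * (1 + i)" using i by (simp add: z_def i_def abs_mult)
    ultimately show ?thesis using i by linarith
  qed
  hence "((z n)\<^sup>2 + a * z n + b) * poly T (z n) \<ge> 1" for n by (rule certificate_outside[OF cert])
  ultimately have "(x0\<^sup>2 + a * x0 + b) * poly T x0 \<ge> 1" by (intro tendsto_lowerbound) auto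
  thus False using root by simp
qed

lemma P'_set_witnesses:
  assumes "(a, b) \<in> P'_set" "(a, b) \<noteq> (0, -1)"
  shows "\<exists>x0 y0. \<bar>x0\<bar> \<ge> 1 \<and> x0\<^sup>2 + a * x0 + b = 0 \<and> \<bar>y0\<bar> \<le> 1 \<and> y0\<^sup>2 + a * y0 + b > 0"
proof -
  have "a\<^sup>2 = 4 * b \<and> 4 * b \<ge> 4 \<or> \<bar>a\<bar> = b + 1 \<and> b \<noteq> -1"
    using assms unfolding P'_set_def by auto
  hence "a\<^sup>2 = 4 * b \<and> 4 * b \<ge> 4 \<or> a = b + 1 \<and> a > 0 \<or> a = - (b + 1) \<and> a < 0"
    by (cases "a \<ge> 0") auto
  then consider "a\<^sup>2 = 4 * b" "4 * b \<ge> 4" | "a = b + 1" "a > 0" | "a = - (b + 1)" "a < 0"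
    by blast
  thus ?thesis
  proof cases
    case 1
    hence "\<bar>- a / 2\<bar> \<ge> 1" using abs_le_square_iff[of 2 a] by simp
    moreover have "(- a / 2)\<^sup>2 + a * (- a / 2) + b = 0" using 1 by (simp add: power2_eq_square field_simps)
    ultimately show ?thesis using 1 by (intro exI[of _ "- a / 2"] exI[of _ 0]) simp
  next
    case 2 thus ?thesis by (intro exI[of _ "-1"] exI[of _ 1]) simp
  next
    case 3 thus ?thesis by (intro exI[of _ 1] exI[of _ "-1"]) simp
  qed
qed

lemma certificate_at_N:
  assumes "(a, b) \<in> P_set"
  shows "\<exists>S T. certificate a b (N_ab a b) S T"
  using certificate_exists[OF assms] N_ab_certificate(2) by blast

theorem lemma4p5:
  fixes s :: "nat \<Rightarrow> real \<times> real" and a b :: real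
  assumes inP: "\<forall>\<nu>. s \<nu> \<in> P_set"
    and conv: "s \<longlonglongrightarrow> (a, b)"
    and bdd: "bdd_above (range (\<lambda>\<nu>. N_ab (fst (s \<nu>)) (snd (s \<nu>))))"
    and ne: "(a, b) \<noteq> (0, -1)"
  shows "(a, b) \<notin> P'_set \<and>
         ((a, b) \<in> P_set \<longrightarrow> N_ab a b \<le> (SUP \<nu>. N_ab (fst (s \<nu>)) (snd (s \<nu>))))"
proof -
  define M where "M = (SUP \<nu>. N_ab (fst (s \<nu>)) (snd (s \<nu>)))"
  have "\<exists>S T. certificate (fst (s \<nu>)) (snd (s \<nu>)) M S T" for \<nu>
    using certificate_at_N[of "fst (s \<nu>)" "snd (s \<nu>)"] inP certificate_mono
      cSUP_upper[OF UNIV_I bdd, of \<nu>] unfolding M_def by fastforce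
  then obtain SS TT where cert: "\<And>\<nu>. certificate (fst (s \<nu>)) (snd (s \<nu>)) M (SS \<nu>) (TT \<nu>)"
    by metis
  have A: "(\<lambda>\<nu>. fst (s \<nu>)) \<longlonglongrightarrow> a" and B: "(\<lambda>\<nu>. snd (s \<nu>)) \<longlonglongrightarrow> b"
    using tendsto_fst[OF conv] tendsto_snd[OF conv] by simp_all
  have limit: "\<exists>S T. certificate a b M S T" if "\<bar>y0\<bar> \<le> 1" "y0\<^sup>2 + a * y0 + b > 0" for y0
    using certificate_limit[OF cert A B that] .
  have "(a, b) \<notin> P'_set"
  proof
    assume "(a, b) \<in> P'_set"
    then obtain x0 y0 where "\<bar>x0\<bar> \<ge> 1" "x0\<^sup>2 + a * x0 + b = 0" "\<bar>y0\<bar> \<le> 1" "y0\<^sup>2 + a * y0 + b > 0"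
      using P'_set_witnesses ne by blast
    thus False using limit certificate_no_outer_root by blast
  qed
  moreover have "N_ab a b \<le> M" if "(a, b) \<in> P_set"
    using limit[of 1] P_set_endpoints[OF that] N_ab_certificate(1) by auto
  ultimately show ?thesis unfolding M_def by blast
qed

end
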